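(* There exist commutative rings $R_1$ and $R_2$ with $R_1 = 0$ (the zero ring) such that $R = R_1 \times R_2$ is a commutative weakly tripotent ring, but $R_2$ is not a tripotent ring of characteristic three.
   Context: All rings are associative with identity $1$. An element $a$ of a ring $R$ is tripotent if $a^3 = a$; a ring is tripotent if every element is tripotent. An element $a$ of $R$ is weakly tripotent if $a^3 = a$ or $(1+a)^3 = 1+a$; a ring $R$ is weakly tripotent if every element of $R$ is weakly tripotent. *)

theory Defs
  imports "HOL-Algebra.Algebra"
begin

definition tripotent_elem :: "('a, 'b) ring_scheme \<Rightarrow> 'a \<Rightarrow> bool" where
  "tripotent_elem R a \<longleftrightarrow> a [^]\<^bsub>R\<^esub> (3::nat) = a"

definition tripotent_ring :: "('a, 'b) ring_scheme \<Rightarrow> bool" where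
  "tripotent_ring R \<longleftrightarrow> ring R \<and> (\<forall>a \<in> carrier R. tripotent_elem R a)"

definition weakly_tripotent_elem :: "('a, 'b) ring_scheme \<Rightarrow> 'a \<Rightarrow> bool" where
  "weakly_tripotent_elem R a \<longleftrightarrow>
     tripotent_elem R a \<or> tripotent_elem R (\<one>\<^bsub>R\<^esub> \<oplus>\<^bsub>R\<^esub> a)"

definition weakly_tripotent_ring :: "('a, 'b) ring_scheme \<Rightarrow> bool" where
  "weakly_tripotent_ring R \<longleftrightarrow> ring R \<and> (\<forall>a \<in> carrier R. weakly_tripotent_elem R a)"

definition ring_char :: "('a, 'b) ring_scheme \<Rightarrow> nat" where
  "ring_char R = (if \<exists>n::nat. n > 0 \<and> add_pow R n \<one>\<^bsub>R\<^esub> = \<zero>\<^bsub>R\<^esub>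
                  then (LEAST n::nat. n > 0 \<and> add_pow R n \<one>\<^bsub>R\<^esub> = \<zero>\<^bsub>R\<^esub>)
                  else 0)"

end

theory Submission
  imports Defs "HOL-Number_Theory.Residues"
begin

text \<open>Take \<open>R\<^sub>2 = \<int>/2\<int>\<close>. It is a Boolean ring: every element is idempotent, hence
  tripotent, hence weakly tripotent. The zero ring is Boolean as well and Boolean rings are closed
  under products, so \<open>R\<^sub>1 \<times> R\<^sub>2\<close> is weakly tripotent; but \<open>\<int>/2\<int>\<close> has characteristic two.\<close>

definition zero_ring :: "'a::zero ring" where
  "zero_ring = \<lparr>carrier = {0}, monoid.mult = \<lambda>x y. 0, one = 0, ring.zero = 0, ring.add = \<lambda>x y. 0\<rparr>"

lemma zero_ring_cring: "cring zero_ring"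
  unfolding zero_ring_def
  by (rule cringI; (rule abelian_groupI | rule comm_monoidI)?; auto)

lemma residue_ring_cring: "m > 1 \<Longrightarrow> cring (residue_ring m)"
  by (rule residues.cring) (simp add: residues_def)

lemma RDirProd_mult:
  "x \<otimes>\<^bsub>RDirProd R S\<^esub> y = (fst x \<otimes>\<^bsub>R\<^esub> fst y, snd x \<otimes>\<^bsub>S\<^esub> snd y)"
  by (simp add: RDirProd_def DirProd_def monoid.defs case_prod_beta)

lemma RDirProd_cring:
  assumes "cring R" and "cring S"
  shows "cring (RDirProd R S)"
proof (rule cring.intro)
  show ring: "ring (RDirProd R S)"
    using assms by (intro RDirProd_ring) (simp_all add: cring.axioms(1))
  show "comm_monoid (RDirProd R S)"
  proof (intro comm_monoid.intro comm_monoid_axioms.intro)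
    show "monoid (RDirProd R S)"
      using ring by (rule ring.axioms(2))
    show "x \<otimes>\<^bsub>RDirProd R S\<^esub> y = y \<otimes>\<^bsub>RDirProd R S\<^esub> x"
      if "x \<in> carrier (RDirProd R S)" and "y \<in> carrier (RDirProd R S)" for x y
      using assms that
      by (auto simp: RDirProd_mult RDirProd_carrier intro: comm_monoid.m_comm cring.axioms(2))
  qed
qed

definition boolean_ring :: "('a, 'b) ring_scheme \<Rightarrow> bool" where
  "boolean_ring R \<longleftrightarrow> ring R \<and> (\<forall>x \<in> carrier R. x \<otimes>\<^bsub>R\<^esub> x = x)"

lemma (in ring) tripotent_if_idempotent:
  assumes "x \<in> carrier R" and "x \<otimes> x = x"
  shows "tripotent_elem R x"
proof -
  have "x [^] (3::nat) = x \<otimes> x \<otimes> x"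
    using assms(1) by (simp add: numeral_eq_Suc)
  then show ?thesis
    using assms by (simp add: tripotent_elem_def)
qed

lemma boolean_ring_imp_tripotent_ring: "boolean_ring R \<Longrightarrow> tripotent_ring R"
  by (simp add: boolean_ring_def tripotent_ring_def ring.tripotent_if_idempotent)

lemma tripotent_ring_imp_weakly_tripotent_ring:
  "tripotent_ring R \<Longrightarrow> weakly_tripotent_ring R"
  by (simp add: tripotent_ring_def weakly_tripotent_ring_def weakly_tripotent_elem_def)

lemma boolean_ring_RDirProd:
  assumes "boolean_ring R" and "boolean_ring S"
  shows "boolean_ring (RDirProd R S)"
  using assms by (auto simp: boolean_ring_def RDirProd_ring RDirProd_mult RDirProd_carrier)

lemma boolean_ring_zero_ring: "boolean_ring zero_ring"
  using cring.axioms(1)[OF zero_ring_cring] unfolding boolean_ring_def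
  by (simp add: zero_ring_def)

lemma boolean_ring_residue_ring_2: "boolean_ring (residue_ring 2)"
proof -
  have "x * x mod 2 = x" if "x \<in> {0..1::int}" for x
  proof -
    from that have "x = 0 \<or> x = 1"
      by auto
    then show ?thesis
      by auto
  qed
  then show ?thesis
    using cring.axioms(1)[OF residue_ring_cring[of 2]] unfolding boolean_ring_def
    by (simp add: residue_ring_def)
qed

lemma ring_char_eqI:
  assumes "n > 0" and "add_pow R n \<one>\<^bsub>R\<^esub> = \<zero>\<^bsub>R\<^esub>"
    and "\<And>k. 0 < k \<Longrightarrow> k < n \<Longrightarrow> add_pow R k \<one>\<^bsub>R\<^esub> \<noteq> \<zero>\<^bsub>R\<^esub>"
  shows "ring_char R = n"
  unfolding ring_char_def using assms
  by (auto intro!: Least_equality simp: not_less[symmetric])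

lemma ring_char_residue_ring_2: "ring_char (residue_ring 2) = 2"
proof (rule ring_char_eqI)
  show "add_pow (residue_ring 2) (2::nat) \<one>\<^bsub>residue_ring 2\<^esub> = \<zero>\<^bsub>residue_ring 2\<^esub>"
    by (simp add: numeral_eq_Suc residue_ring_def add_pow_def)
  show "add_pow (residue_ring 2) k \<one>\<^bsub>residue_ring 2\<^esub> \<noteq> \<zero>\<^bsub>residue_ring 2\<^esub>"
    if "0 < k" and "k < 2" for k :: nat
  proof -
    from that have "k = 1"
      by simp
    then show ?thesis
      by (simp add: residue_ring_def add_pow_def)
  qed
qed simp

theorem proposition2p1:
  shows "\<exists>(R1 :: int ring) (R2 :: int ring).
           cring R1 \<and> cring R2 \<and> carrier R1 = {\<zero>\<^bsub>R1\<^esub>} \<and>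
           cring (RDirProd R1 R2) \<and> weakly_tripotent_ring (RDirProd R1 R2) \<and>
           \<not> (tripotent_ring R2 \<and> ring_char R2 = 3)"
proof (intro exI conjI)
  show "cring zero_ring" and "cring (residue_ring 2)"
    by (simp_all add: zero_ring_cring residue_ring_cring)
  then show "cring (RDirProd zero_ring (residue_ring 2))"
    by (rule RDirProd_cring)
  show "carrier zero_ring = {\<zero>\<^bsub>zero_ring\<^esub>}"
    by (simp add: zero_ring_def)
  show "weakly_tripotent_ring (RDirProd zero_ring (residue_ring 2))"
    by (intro tripotent_ring_imp_weakly_tripotent_ring boolean_ring_imp_tripotent_ring
        boolean_ring_RDirProd boolean_ring_zero_ring boolean_ring_residue_ring_2)
  show "\<not> (tripotent_ring (residue_ring 2) \<and> ring_char (residue_ring 2) = 3)"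
    using ring_char_residue_ring_2 by simp
qed

end
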